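(* There is a family of matrices $C_{n}$, called Chet matrices, for which $\sum_{i}C_{n}(i,j)=1$ and $\sum_{j}C_{n}(i,j)=1$ for all $i,j$, and if $\phi(C_{n})$ is defined as for doubly stochastic matrices, \[ \phi(C_n)=\min_{S\subseteq[n],\,|S|\leq n/2}\frac{\sum\limits _{i\in S,j\in\overline{S}}C_{n}(i,j)}{|S|}, \] then for all $n$, \[ \phi(C_{n})\leq 2\cdot\dfrac{\Delta(C_{n})}{n}. \]
   Context: For an $n\times n$ matrix $R$ whose eigenvalues are ordered as $\lambda_{1}>\text{Re}\lambda_{2}\geq\dots\geq\text{Re}\lambda_{n}$ with $\lambda_1$ real positive, the spectral gap is $\Delta(R)=1-\text{Re}\lambda_{2}(R)/\lambda_{1}(R)$. The Chet matrix $C_n$ is the $n\times n$ matrix with: $C_n(i,i+1)=r$ for $1\leq i\leq n-1$; first column $C_n(i,1)=b_{i-1}$ for $1\leq i\leq n$; last row $C_n(n,j)=b_{n-j}$ for $1\leq j\leq n$; $C_n(i,j)=c_{i-j}$ for $2\leq j\leq i\leq n-1$; all other entries $0$. Here $b_i=1-r-\sum_{j=0}^{i-1}c_j$ for $0\leq i\leq n-2$ and $b_{n-1}=1-\sum_{i=0}^{n-2}b_i$. For $k=0,\dots,n-3$, inductively, $c_k$ is set (as a function of $r$) so that $\text{Tr}(C_n^{k+1})=1$; explicitly, $c_{k}=\dfrac{1-\text{Tr}(C_{n}|_{k})^{k+1}}{(n-k-2)(k+1)r^{k}}$, where $C_n|_k$ has the structure of $C_n$ with all $c_l$, $l\geq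 k$, and all $b_l$, $l\geq k+1$, set to $0$. Finally $r=(1/n)^{1/(n-1)}$. *)

theory Defs
  imports "Jordan_Normal_Form.Char_Poly" "HOL-Computational_Algebra.Polynomial" Complex_Main
begin

definition mtrace :: "'a::comm_ring_1 mat \<Rightarrow> 'a" where
  "mtrace A = (\<Sum>i<dim_row A. A $$ (i,i))"

definition cspec :: "real mat \<Rightarrow> complex multiset" where
  "cspec R = proots (char_poly (map_mat complex_of_real R))"

(* lambda_1: the eigenvalue with largest real part (assumed real positive, as in the paper). *)
definition lambda1 :: "real mat \<Rightarrow> real" where
  "lambda1 R = Max (Re ` set_mset (cspec R))"

(* Re lambda_2: largest real part among the remaining eigenvalues (one copy of lambda_1 removed). *)
definition re_lambda2 :: "real mat \<Rightarrow> real" where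
  "re_lambda2 R = Max (Re ` set_mset (cspec R - {# complex_of_real (lambda1 R) #}))"

definition spectral_gap :: "real mat \<Rightarrow> real" where
  "spectral_gap R = 1 - re_lambda2 R / lambda1 R"

definition chet_pattern :: "nat \<Rightarrow> real \<Rightarrow> (nat \<Rightarrow> real) \<Rightarrow> (nat \<Rightarrow> real) \<Rightarrow> nat \<Rightarrow> nat \<Rightarrow> real" where
  "chet_pattern n r c b i j =
     (if 1 \<le> i \<and> i \<le> n - 1 \<and> j = i + 1 then r
      else if 1 \<le> i \<and> i \<le> n \<and> j = 1 then b (i - 1)
      else if i = n \<and> 1 \<le> j \<and> j \<le> n then b (n - j)
      else if 2 \<le> j \<and> j \<le> i \<and> i \<le> n - 1 then c (i - j)
      else 0)"

(* As an n x n matrix (0-based storage of the 1-based entries). *)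
definition chet_mat :: "nat \<Rightarrow> real \<Rightarrow> (nat \<Rightarrow> real) \<Rightarrow> (nat \<Rightarrow> real) \<Rightarrow> real mat" where
  "chet_mat n r c b = mat n n (\<lambda>(i,j). chet_pattern n r c b (i+1) (j+1))"

definition chet_r :: "nat \<Rightarrow> real" where
  "chet_r n = (1 / real n) powr (1 / (real n - 1))"

definition c_of :: "real list \<Rightarrow> nat \<Rightarrow> real" where
  "c_of cl l = (if l < length cl then cl ! l else 0)"

definition b_formula :: "real \<Rightarrow> (nat \<Rightarrow> real) \<Rightarrow> nat \<Rightarrow> real" where
  "b_formula r c i = 1 - r - (\<Sum>j<i. c j)"

definition chet_trunc :: "nat \<Rightarrow> real list \<Rightarrow> real mat" where
  "chet_trunc n cl =
     (let k = length cl; r = chet_r n; c = c_of cl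
      in chet_mat n r c (\<lambda>l. if l \<le> k then b_formula r c l else 0))"

definition c_next :: "nat \<Rightarrow> real list \<Rightarrow> real" where
  "c_next n cl =
     (let k = length cl
      in (1 - mtrace (chet_trunc n cl ^\<^sub>m (k+1)))
           / ((real n - real k - 2) * (real k + 1) * chet_r n ^ k))"

fun chet_cs :: "nat \<Rightarrow> nat \<Rightarrow> real list" where
  "chet_cs n 0 = []"
| "chet_cs n (Suc k) = chet_cs n k @ [c_next n (chet_cs n k)]"

definition chet_c :: "nat \<Rightarrow> nat \<Rightarrow> real" where
  "chet_c n = c_of (chet_cs n (n - 2))"

definition chet_b :: "nat \<Rightarrow> nat \<Rightarrow> real" where
  "chet_b n i =
     (if i \<le> n - 2 then b_formula (chet_r n) (chet_c n) i
      else if i = n - 1 then 1 - (\<Sum>l\<le>n-2. b_formula (chet_r n) (chet_c n) l)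
      else 0)"

definition chet :: "nat \<Rightarrow> real mat" where
  "chet n = chet_mat n (chet_r n) (chet_c n) (chet_b n)"

(* phi(R), with 1-based index set [n] = {1..n}; entry R(i,j) stored at (i-1,j-1) *)
definition phi :: "real mat \<Rightarrow> real" where
  "phi R = (let n = dim_row R in
     Min ((\<lambda>S. (\<Sum>i\<in>S. \<Sum>j\<in>{1..n} - S. R $$ (i-1, j-1)) / real (card S))
          ` {S. S \<subseteq> {1..n} \<and> S \<noteq> {} \<and> real (card S) \<le> real n / 2}))"

end

theory Submission
  imports Defs "Jordan_Normal_Form.Schur_Decomposition" "HOL-Computational_Algebra.Polynomial_FPS"
begin

(* C_n is lower Hessenberg with constant superdiagonal r, and the choice of the b_i makes all
   row and column sums 1. So 1 is an eigenvalue, and the cut S = {1..n div 2} is crossed only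
   by the entry C_n(n div 2, n div 2 + 1) = r; as r^(n-1) = 1/n this gives
   phi(C_n) <= r/(n div 2) <= 2/n.

   It remains to show Delta(C_n) = 1, i.e. that the other n - 1 eigenvalues x vanish. Changing a
   Hessenberg matrix from its k-th subdiagonal on changes tr C^(k+1) by (k+1) r^k times the sum
   of the change along that subdiagonal, and the c_k are chosen so that tr C^m = 1 for
   1 <= m <= n-2; hence the power sums p_1, ..., p_(n-2) of the x vanish. By Cayley-Hamilton the
   columns of prod (C - x) lie in the kernel of C - 1, which consists of constant vectors, so the
   sum prod (1 - x) of the last column is n times its top entry r^(n-1) = 1/n. Newton's
   identities turn p_1 = ... = p_(n-2) = 0 and prod (1 - x) = 1 into x = 0 for all x. *)

section \<open>Banded matrices and traces\<close>

lemma mult_mat_index_sum: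
  assumes "A \<in> carrier_mat nr n" "B \<in> carrier_mat n nc" "i < nr" "j < nc"
  shows "(A * B) $$ (i,j) = (\<Sum>l<n. A $$ (i,l) * B $$ (l,j))"
  using assms by (auto simp: scalar_prod_def lessThan_atLeast0 intro!: sum.cong)

lemma pow_mat_add:
  fixes A :: "'a::semiring_1 mat"
  assumes A: "A \<in> carrier_mat n n"
  shows "A ^\<^sub>m (a + b) = A ^\<^sub>m a * A ^\<^sub>m b"
proof (induction b)
  case (Suc b)
  have "A ^\<^sub>m (a + Suc b) = A ^\<^sub>m a * A ^\<^sub>m b * A" using Suc by simp
  also have "\<dots> = A ^\<^sub>m a * (A ^\<^sub>m b * A)" using A by (simp add: assoc_mult_mat[of _ n n _ n _ n])
  finally show ?case by simp
qed (use A in simp)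

lemma mtrace_add:
  assumes "A \<in> carrier_mat n n" "B \<in> carrier_mat n n"
  shows "mtrace (A + B) = mtrace A + mtrace B"
  using assms unfolding mtrace_def by (auto simp: sum.distrib)

lemma mtrace_mult_comm:
  fixes A B :: "'a::comm_ring_1 mat"
  assumes A: "A \<in> carrier_mat n m" and B: "B \<in> carrier_mat m n"
  shows "mtrace (A * B) = mtrace (B * A)"
proof -
  have "mtrace (A * B) = (\<Sum>i<n. \<Sum>l<m. A $$ (i,l) * B $$ (l,i))"
    unfolding mtrace_def using A B
    by (auto simp: mult_mat_index_sum[OF A B] simp del: index_mult_mat(1) intro!: sum.cong)
  also have "\<dots> = (\<Sum>l<m. \<Sum>i<n. B $$ (l,i) * A $$ (i,l))"
    by (subst sum.swap) (simp add: mult.commute)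
  also have "\<dots> = mtrace (B * A)"
    unfolding mtrace_def using A B
    by (auto simp: mult_mat_index_sum[OF B A] simp del: index_mult_mat(1) intro!: sum.cong)
  finally show ?thesis .
qed

text \<open>Lower Hessenberg matrices are those with \<open>upper_band A 1\<close>; for negative \<open>d\<close> the
  diagonal and the first \<open>-d - 1\<close> subdiagonals vanish as well.\<close>

definition upper_band :: "'a::zero mat \<Rightarrow> int \<Rightarrow> bool" where
  "upper_band A d \<longleftrightarrow> (\<forall>i<dim_row A. \<forall>j<dim_col A. d < int j - int i \<longrightarrow> A $$ (i,j) = 0)"

lemma upper_bandD:
  "upper_band A d \<Longrightarrow> A \<in> carrier_mat nr nc \<Longrightarrow> i < nr \<Longrightarrow> j < nc \<Longrightarrow> d < int j - int i
    \<Longrightarrow> A $$ (i,j) = 0"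
  unfolding upper_band_def by auto

lemma upper_band_mono: "upper_band A a \<Longrightarrow> a \<le> b \<Longrightarrow> upper_band A b"
  unfolding upper_band_def by force

lemma upper_band_one: "upper_band (1\<^sub>m n) 0"
  unfolding upper_band_def by auto

lemma upper_band_minus_scalar:
  fixes A :: "'a::ring_1 mat"
  assumes A: "A \<in> carrier_mat n n" and a: "upper_band A d" and d: "0 \<le> d"
  shows "upper_band (A - x \<cdot>\<^sub>m 1\<^sub>m n) d"
  unfolding upper_band_def
proof (intro allI impI)
  fix i j assume "i < dim_row (A - x \<cdot>\<^sub>m 1\<^sub>m n)" "j < dim_col (A - x \<cdot>\<^sub>m 1\<^sub>m n)" "d < int j - int i"
  then show "(A - x \<cdot>\<^sub>m 1\<^sub>m n) $$ (i,j) = 0" using A d upper_bandD[OF a A] by auto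
qed

lemma upper_band_mult:
  fixes A B :: "'a::semiring_0 mat"
  assumes A: "A \<in> carrier_mat n n" and B: "B \<in> carrier_mat n n"
    and a: "upper_band A a" and b: "upper_band B b"
  shows "upper_band (A * B) (a + b)"
  unfolding upper_band_def
proof (intro allI impI)
  fix i j assume i: "i < dim_row (A * B)" and j: "j < dim_col (A * B)" and ij: "a + b < int j - int i"
  have "A $$ (i,l) * B $$ (l,j) = 0" if l: "l < n" for l
  proof (cases "a < int l - int i")
    case True then show ?thesis using upper_bandD[OF a A] i l A by auto
  next
    case False
    then have "b < int j - int l" using ij by linarith
    then show ?thesis using upper_bandD[OF b B l] j B by simp
  qed
  moreover have "(A * B) $$ (i,j) = (\<Sum>l<n. A $$ (i,l) * B $$ (l,j))"
    by (rule mult_mat_index_sum) (use A B i j in auto)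
  ultimately show "(A * B) $$ (i,j) = 0" by simp
qed

lemma upper_band_pow:
  fixes A :: "'a::semiring_1 mat"
  assumes A: "A \<in> carrier_mat n n" and a: "upper_band A 1"
  shows "upper_band (A ^\<^sub>m m) (int m)"
proof (induction m)
  case 0 then show ?case using A upper_band_one[of n] by simp
next
  case (Suc m)
  have "upper_band (A ^\<^sub>m m * A) (int m + 1)" by (rule upper_band_mult[OF _ A Suc a]) (use A in auto)
  then show ?case by (simp add: add.commute)
qed

lemma mtrace_upper_band_neg:
  assumes "A \<in> carrier_mat n n" "upper_band A (-1)"
  shows "mtrace A = 0"
  using assms unfolding mtrace_def upper_band_def by (auto intro!: sum.neutral)

lemma upper_band_mult_index:
  fixes A B :: "'a::semiring_0 mat"
  assumes A: "A \<in> carrier_mat n n" and B: "B \<in> carrier_mat n n"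
    and a: "upper_band A (int l - int i)" and b: "upper_band B (int j - int l)"
    and i: "i < n" and j: "j < n" and l: "l < n"
  shows "(A * B) $$ (i,j) = A $$ (i,l) * B $$ (l,j)"
proof -
  have "(A * B) $$ (i,j) = (\<Sum>m<n. A $$ (i,m) * B $$ (m,j))" by (rule mult_mat_index_sum[OF A B i j])
  also have "\<dots> = (\<Sum>m\<in>{l}. A $$ (i,m) * B $$ (m,j))"
  proof (rule sum.mono_neutral_right)
    show "\<forall>m\<in>{..<n} - {l}. A $$ (i,m) * B $$ (m,j) = 0"
    proof
      fix m assume m: "m \<in> {..<n} - {l}"
      then consider "l < m" | "m < l" by fastforce
      then show "A $$ (i,m) * B $$ (m,j) = 0"
        by cases (use m upper_bandD[OF a A i, of m] upper_bandD[OF b B _ j, of m] in auto)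
    qed
  qed (use l in auto)
  finally show ?thesis by simp
qed

lemma upper_band_pow_superdiag:
  fixes A :: "'a::comm_semiring_1 mat"
  assumes A: "A \<in> carrier_mat n n" and a: "upper_band A 1"
    and sd: "\<And>l. l + 1 < n \<Longrightarrow> A $$ (l, l+1) = r"
  shows "i + m < n \<Longrightarrow> (A ^\<^sub>m m) $$ (i, i+m) = r ^ m"
proof (induction m)
  case 0 then show ?case using A by auto
next
  case (Suc m)
  have "(A ^\<^sub>m m * A) $$ (i, i+m+1) = (A ^\<^sub>m m) $$ (i, i+m) * A $$ (i+m, i+m+1)"
    by (rule upper_band_mult_index[OF _ A]) (use A a upper_band_pow[OF A a] Suc.prems in auto)
  then show ?case using Suc sd[of "i+m"] by (simp add: mult.commute)
qed

lemma upper_band_add: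
  fixes A B :: "'a::monoid_add mat"
  assumes A: "A \<in> carrier_mat nr nc" and B: "B \<in> carrier_mat nr nc"
    and a: "upper_band A d" and b: "upper_band B d"
  shows "upper_band (A + B) d"
  unfolding upper_band_def
proof (intro allI impI)
  fix i j assume "i < dim_row (A + B)" "j < dim_col (A + B)" "d < int j - int i"
  then show "(A + B) $$ (i,j) = 0"
    using A B upper_bandD[OF a A] upper_bandD[OF b B] by simp
qed

text \<open>Only the \<open>k\<close>-th subdiagonal of \<open>D\<close> meets the \<open>k\<close>-th superdiagonal of \<open>B ^ k\<close>.\<close>

lemma mtrace_mult_pow_superdiag:
  fixes B D :: "'a::comm_ring_1 mat"
  assumes B: "B \<in> carrier_mat n n" and D: "D \<in> carrier_mat n n"
    and bB: "upper_band B 1" and bD: "upper_band D (- int k)"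
    and sd: "\<And>l. l + 1 < n \<Longrightarrow> B $$ (l, l+1) = r"
  shows "mtrace (D * B ^\<^sub>m k) = r ^ k * (\<Sum>j<n-k. D $$ (j+k, j))"
proof -
  have Bk: "B ^\<^sub>m k \<in> carrier_mat n n" using B by auto
  have diag: "(D * B ^\<^sub>m k) $$ (i,i) = (if k \<le> i then r ^ k * D $$ (i, i-k) else 0)" if i: "i < n" for i
  proof (cases "k \<le> i")
    case True
    have "(D * B ^\<^sub>m k) $$ (i,i) = D $$ (i, i-k) * (B ^\<^sub>m k) $$ (i-k, i)"
      by (rule upper_band_mult_index[OF D Bk]) (use True i bD upper_band_pow[OF B bB, of k] in auto)
    also have "(B ^\<^sub>m k) $$ (i-k, i) = r ^ k"
      using upper_band_pow_superdiag[OF B bB sd, of "i-k" k] True i by simp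
    finally show ?thesis using True by (simp add: mult.commute)
  next
    case False
    then have "D $$ (i,l) = 0" if "l < n" for l using upper_bandD[OF bD D i that] by auto
    then show ?thesis using False i by (simp add: mult_mat_index_sum[OF D Bk])
  qed
  have "mtrace (D * B ^\<^sub>m k) = (\<Sum>i<n. if k \<le> i then r ^ k * D $$ (i, i-k) else 0)"
    unfolding mtrace_def using D by (auto intro!: sum.cong simp: diag)
  also have "\<dots> = (\<Sum>i\<in>{k..<n}. r ^ k * D $$ (i, i-k))"
    by (rule sum.mono_neutral_cong_right) auto
  also have "\<dots> = (\<Sum>j<n-k. r ^ k * D $$ (j+k, j))"
    by (rule sum.reindex_bij_witness[of _ "\<lambda>j. j + k" "\<lambda>i. i - k"]) auto
  finally show ?thesis by (simp add: sum_distrib_left)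
qed

lemma upper_band_pow_diff:
  fixes A B :: "'a::comm_ring_1 mat"
  assumes A: "A \<in> carrier_mat n n" and B: "B \<in> carrier_mat n n"
    and bA: "upper_band A 1" and bB: "upper_band B 1" and bD: "upper_band (A - B) (- int k)"
  shows "upper_band (A ^\<^sub>m a - B ^\<^sub>m a) (int a - 1 - int k)"
proof (induction a)
  case 0 show ?case using A B by (auto simp: upper_band_def)
next
  case (Suc a)
  have Aa: "A ^\<^sub>m a \<in> carrier_mat n n" and Ba: "B ^\<^sub>m a \<in> carrier_mat n n" using A B by auto
  have eq: "A ^\<^sub>m a * (A - B) + (A ^\<^sub>m a - B ^\<^sub>m a) * B = A ^\<^sub>m Suc a - B ^\<^sub>m Suc a"
    using A B Aa Ba by (simp add: mult_minus_distrib_mat[OF Aa A B] minus_mult_distrib_mat[OF Aa Ba B])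
      (intro eq_matI, auto)
  have "upper_band (A ^\<^sub>m a * (A - B)) (int a + - int k)"
    by (rule upper_band_mult[of _ n, OF _ _ upper_band_pow[OF A bA] bD]) (use A B in auto)
  then have "upper_band (A ^\<^sub>m a * (A - B)) (int (Suc a) - 1 - int k)" by simp
  moreover have "upper_band ((A ^\<^sub>m a - B ^\<^sub>m a) * B) (int a - 1 - int k + 1)"
    by (rule upper_band_mult[OF _ B Suc bB]) (use A B in auto)
  then have "upper_band ((A ^\<^sub>m a - B ^\<^sub>m a) * B) (int (Suc a) - 1 - int k)" by simp
  ultimately have "upper_band (A ^\<^sub>m a * (A - B) + (A ^\<^sub>m a - B ^\<^sub>m a) * B) (int (Suc a) - 1 - int k)"
    by (rule upper_band_add[rotated 2]) (use Aa Ba A B in auto)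
  then show ?case unfolding eq .
qed

lemma mtrace_pow_perturb_term:
  fixes A B :: "'a::comm_ring_1 mat"
  assumes A: "A \<in> carrier_mat n n" and B: "B \<in> carrier_mat n n"
    and bA: "upper_band A 1" and bB: "upper_band B 1" and bD: "upper_band (A - B) (- int k)"
    and a: "a \<le> k"
  shows "mtrace (A ^\<^sub>m a * (A - B) * B ^\<^sub>m (k - a)) = mtrace ((A - B) * B ^\<^sub>m k)"
proof -
  define D where "D = A - B"
  define E where "E = A ^\<^sub>m a - B ^\<^sub>m a"
  have D: "D \<in> carrier_mat n n" and E: "E \<in> carrier_mat n n" using A B unfolding D_def E_def by auto
  have Bp: "B ^\<^sub>m m \<in> carrier_mat n n" for m using B by auto
  have "A ^\<^sub>m a = B ^\<^sub>m a + E" using A B unfolding E_def by auto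
  then have "A ^\<^sub>m a * D * B ^\<^sub>m (k - a) = (B ^\<^sub>m a * D + E * D) * B ^\<^sub>m (k - a)"
    using add_mult_distrib_mat[OF Bp E D] by simp
  also have "\<dots> = B ^\<^sub>m a * D * B ^\<^sub>m (k - a) + E * D * B ^\<^sub>m (k - a)"
    by (rule add_mult_distrib_mat[OF mult_carrier_mat[OF Bp D] mult_carrier_mat[OF E D] Bp])
  finally have split: "A ^\<^sub>m a * D * B ^\<^sub>m (k - a) = B ^\<^sub>m a * D * B ^\<^sub>m (k - a) + E * D * B ^\<^sub>m (k - a)" .
  have bE: "upper_band E (int a - 1 - int k)"
    unfolding E_def by (rule upper_band_pow_diff[OF A B bA bB bD])
  have "upper_band (E * D * B ^\<^sub>m (k - a)) (int a - 1 - int k + - int k + int (k - a))"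
    by (rule upper_band_mult[of _ n, OF _ _ upper_band_mult[OF E D bE bD[folded D_def]] upper_band_pow[OF B bB]])
      (use D E B in auto)
  then have "upper_band (E * D * B ^\<^sub>m (k - a)) (-1)"
    by (rule upper_band_mono) (use a in linarith)
  moreover have "E * D * B ^\<^sub>m (k - a) \<in> carrier_mat n n"
    using mult_carrier_mat[OF mult_carrier_mat[OF E D] Bp] .
  ultimately have tE: "mtrace (E * D * B ^\<^sub>m (k - a)) = 0" by (rule mtrace_upper_band_neg[rotated])
  have tB: "mtrace (B ^\<^sub>m a * D * B ^\<^sub>m (k - a)) = mtrace (D * B ^\<^sub>m k)"
  proof -
    have "mtrace (B ^\<^sub>m a * D * B ^\<^sub>m (k - a)) = mtrace (B ^\<^sub>m a * (D * B ^\<^sub>m (k - a)))"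
      by (simp only: assoc_mult_mat[OF Bp D Bp])
    also have "\<dots> = mtrace (D * B ^\<^sub>m (k - a) * B ^\<^sub>m a)"
      by (rule mtrace_mult_comm[OF Bp mult_carrier_mat[OF D Bp]])
    also have "\<dots> = mtrace (D * (B ^\<^sub>m (k - a) * B ^\<^sub>m a))"
      by (simp only: assoc_mult_mat[OF D Bp Bp])
    also have "B ^\<^sub>m (k - a) * B ^\<^sub>m a = B ^\<^sub>m k"
      using pow_mat_add[OF B, of "k - a" a] a by simp
    finally show ?thesis .
  qed
  have "mtrace (A ^\<^sub>m a * D * B ^\<^sub>m (k - a))
      = mtrace (B ^\<^sub>m a * D * B ^\<^sub>m (k - a)) + mtrace (E * D * B ^\<^sub>m (k - a))"
    unfolding split
    by (rule mtrace_add[OF mult_carrier_mat[OF mult_carrier_mat[OF Bp D] Bp]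
          mult_carrier_mat[OF mult_carrier_mat[OF E D] Bp]])
  then show ?thesis unfolding D_def[symmetric] tB tE by simp
qed

text \<open>Expanding \<open>(B + D) ^ (k + 1)\<close>, every word with two or more factors \<open>D\<close> has traceless
  band structure, and the \<open>k + 1\<close> words with one factor \<open>D\<close> all have the trace of \<open>D * B ^ k\<close>.\<close>

lemma mtrace_pow_perturb:
  fixes A B :: "'a::comm_ring_1 mat"
  assumes A: "A \<in> carrier_mat n n" and B: "B \<in> carrier_mat n n"
    and bA: "upper_band A 1" and bB: "upper_band B 1" and bD: "upper_band (A - B) (- int k)"
  shows "mtrace (A ^\<^sub>m (k + 1)) = mtrace (B ^\<^sub>m (k + 1)) + of_nat (k + 1) * mtrace ((A - B) * B ^\<^sub>m k)"
proof -
  define D where "D = A - B"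
  have D: "D \<in> carrier_mat n n" using A B unfolding D_def by auto
  have BD: "B + D = A" using A B unfolding D_def by auto
  have Ap: "A ^\<^sub>m m \<in> carrier_mat n n" and Bp: "B ^\<^sub>m m \<in> carrier_mat n n" for m using A B by auto
  have "mtrace (A ^\<^sub>m a * B ^\<^sub>m (k + 1 - a)) = mtrace (B ^\<^sub>m (k + 1)) + of_nat a * mtrace (D * B ^\<^sub>m k)"
    if "a \<le> k + 1" for a
    using that
  proof (induction a)
    case (Suc a)
    then have a: "a \<le> k" by simp
    have "B * B ^\<^sub>m (k - a) = B ^\<^sub>m (k + 1 - a)"
      using pow_mat_add[OF B, of 1 "k - a"] a by (simp add: Suc_diff_le)
    then have AB: "A ^\<^sub>m a * B * B ^\<^sub>m (k - a) = A ^\<^sub>m a * B ^\<^sub>m (k + 1 - a)"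
      using Ap[of a] Bp B by (simp add: assoc_mult_mat[of _ n n _ n _ n])
    have "A ^\<^sub>m Suc a * B ^\<^sub>m (k + 1 - Suc a) = A ^\<^sub>m a * (B + D) * B ^\<^sub>m (k - a)"
      using BD by simp
    also have "\<dots> = A ^\<^sub>m a * B * B ^\<^sub>m (k - a) + A ^\<^sub>m a * D * B ^\<^sub>m (k - a)"
      unfolding mult_add_distrib_mat[OF Ap B D]
      by (rule add_mult_distrib_mat[of _ n n]) (use A B D in auto)
    finally have eq: "A ^\<^sub>m Suc a * B ^\<^sub>m (k + 1 - Suc a)
        = A ^\<^sub>m a * B ^\<^sub>m (k + 1 - a) + A ^\<^sub>m a * D * B ^\<^sub>m (k - a)"
      unfolding AB .
    have "mtrace (A ^\<^sub>m Suc a * B ^\<^sub>m (k + 1 - Suc a))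
        = mtrace (A ^\<^sub>m a * B ^\<^sub>m (k + 1 - a)) + mtrace (A ^\<^sub>m a * D * B ^\<^sub>m (k - a))"
      unfolding eq by (rule mtrace_add[of _ n]) (use A B D in auto)
    also have "mtrace (A ^\<^sub>m a * B ^\<^sub>m (k + 1 - a)) = mtrace (B ^\<^sub>m (k + 1)) + of_nat a * mtrace (D * B ^\<^sub>m k)"
      by (rule Suc.IH) (use a in simp)
    also have "mtrace (A ^\<^sub>m a * D * B ^\<^sub>m (k - a)) = mtrace (D * B ^\<^sub>m k)"
      using mtrace_pow_perturb_term[OF A B bA bB bD a] unfolding D_def .
    also have "mtrace (B ^\<^sub>m (k + 1)) + of_nat a * mtrace (D * B ^\<^sub>m k) + mtrace (D * B ^\<^sub>m k)
        = mtrace (B ^\<^sub>m (k + 1)) + of_nat (Suc a) * mtrace (D * B ^\<^sub>m k)"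
      by (simp only: of_nat_Suc distrib_right mult_1_left add.assoc add.commute[of "mtrace (D * B ^\<^sub>m k)"])
    finally show ?case .
  qed (use A B in simp)
  from this[of "k + 1"] show ?thesis
    using right_mult_one_mat[OF pow_carrier_mat[OF A, of "k + 1"]] B unfolding D_def by simp
qed

section \<open>Power sums\<close>

definition reflected_root_poly :: "'a::comm_ring_1 list \<Rightarrow> 'a poly" where
  "reflected_root_poly xs = (\<Prod>x\<leftarrow>xs. [:1, -x:])"

definition power_sum_fps :: "'a::comm_ring_1 list \<Rightarrow> 'a fps" where
  "power_sum_fps xs = Abs_fps (\<lambda>j. if j = 0 then 0 else (\<Sum>x\<leftarrow>xs. x ^ j))"

lemma poly_reflected_root_poly: "poly (reflected_root_poly xs) z = (\<Prod>x\<leftarrow>xs. 1 - x * z)"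
  unfolding reflected_root_poly_def by (induction xs) (auto simp: algebra_simps)

lemma degree_reflected_root_poly: "degree (reflected_root_poly xs) \<le> length xs"
proof -
  have "degree (reflected_root_poly xs) \<le> sum_list (map degree (map (\<lambda>x. [:1, -x:]) xs))"
    unfolding reflected_root_poly_def by (rule degree_prod_list_le)
  also have "\<dots> \<le> sum_list (map (\<lambda>x. 1) xs)" by (induction xs) (auto simp: add_mono)
  also have "\<dots> = length xs" by (induction xs) auto
  finally show ?thesis .
qed

text \<open>Newton's identities in generating-function form: \<open>X R' = - R S\<close>, where \<open>S\<close> is
  the generating function of the power sums.\<close>

lemma reflected_root_poly_log_deriv:
  fixes xs :: "'a::field list"
  shows "fps_X * fps_deriv (fps_of_poly (reflected_root_poly xs))
    = - (fps_of_poly (reflected_root_poly xs) * power_sum_fps xs)"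
proof (induction xs)
  case Nil then show ?case unfolding reflected_root_poly_def power_sum_fps_def by (simp add: fps_ext)
next
  case (Cons x xs)
  define F where "F = fps_of_poly (reflected_root_poly xs)"
  define L where "L = 1 - fps_const x * fps_X"
  define G where "G = Abs_fps (\<lambda>j. if j = 0 then 0 else x ^ j)"
  have RL: "fps_of_poly (reflected_root_poly (x # xs)) = L * F"
    unfolding reflected_root_poly_def F_def L_def
    by (simp add: fps_of_poly_mult fps_of_poly_pCons algebra_simps fps_const_neg)
  have LG: "L * G = fps_const x * fps_X"
  proof (rule fps_ext)
    fix j
    have "L * G = G - fps_const x * (fps_X * G)" unfolding L_def by (simp add: algebra_simps)
    then show "fps_nth (L * G) j = fps_nth (fps_const x * fps_X) j"
      unfolding G_def by (cases j; cases "j - 1") (auto simp: fps_X_mult_nth)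
  qed
  have S: "power_sum_fps (x # xs) = G + power_sum_fps xs"
    unfolding power_sum_fps_def G_def by (rule fps_ext) auto
  have "fps_deriv L = - fps_const x" unfolding L_def by simp
  then have "fps_X * fps_deriv (L * F) = - fps_const x * fps_X * F + L * (fps_X * fps_deriv F)"
    by (simp add: fps_deriv_mult algebra_simps)
  also have "\<dots> = - (L * G) * F - L * F * power_sum_fps xs"
    unfolding Cons[folded F_def] LG by (simp add: algebra_simps del: fps_const_neg)
  also have "\<dots> = - (L * F * power_sum_fps (x # xs))" unfolding S by (simp add: algebra_simps)
  finally show ?case unfolding RL .
qed

lemma coeff_reflected_root_poly_eq_0:
  fixes xs :: "'a::field_char_0 list"
  assumes ps: "\<And>m. 1 \<le> m \<Longrightarrow> m \<le> k \<Longrightarrow> (\<Sum>x\<leftarrow>xs. x ^ m) = 0" and k: "1 \<le> k"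
  shows "coeff (reflected_root_poly xs) k = 0"
proof -
  have "fps_nth (fps_of_poly (reflected_root_poly xs) * power_sum_fps xs) k = 0"
    unfolding fps_mult_nth power_sum_fps_def using ps by (intro sum.neutral) auto
  then have "of_nat k * coeff (reflected_root_poly xs) k = 0"
    using arg_cong[OF reflected_root_poly_log_deriv[of xs], of "\<lambda>f. fps_nth f k"] k
    by (cases k) auto
  then show ?thesis using k by simp
qed

text \<open>If \<open>p\<^sub>1 = \<dots> = p\<^sub>N\<^sub>-\<^sub>1 = 0\<close> for a list of length \<open>N\<close>, then
  \<open>\<Prod>(1 - x z) = 1 + c z\<^sup>N\<close>, and evaluating at \<open>z = 1\<close> forces \<open>c = 0\<close>.\<close>

lemma power_sums_eq_0_imp_zero:
  fixes xs :: "'a::field_char_0 list"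
  assumes ps: "\<And>m. 1 \<le> m \<Longrightarrow> m < length xs \<Longrightarrow> (\<Sum>x\<leftarrow>xs. x ^ m) = 0"
    and prod: "(\<Prod>x\<leftarrow>xs. 1 - x) = 1"
    and x: "x \<in> set xs"
  shows "x = 0"
proof -
  define N where "N = length xs"
  define R where "R = reflected_root_poly xs"
  have N: "N \<ge> 1" using x unfolding N_def by (cases xs) auto
  have c0: "coeff R 0 = 1"
    using poly_reflected_root_poly[of xs 0] unfolding R_def by (simp add: poly_0_coeff_0 map_replicate_const)
  have cmid: "coeff R k = 0" if "1 \<le> k" "k < N" for k
    unfolding R_def by (rule coeff_reflected_root_poly_eq_0) (use ps that in \<open>auto simp: N_def\<close>)
  have chigh: "coeff R k = 0" if "N < k" for k
    using degree_reflected_root_poly[of xs] that unfolding R_def N_def by (intro coeff_eq_0) auto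
  have R: "R = [:1:] + monom (coeff R N) N"
  proof (rule poly_eqI)
    fix k
    consider "k = 0" | "1 \<le> k \<and> k < N" | "k = N" | "N < k" by linarith
    then show "coeff R k = coeff ([:1:] + monom (coeff R N) N) k"
      by cases (use N c0 cmid chigh in \<open>auto simp: coeff_monom coeff_pCons split: nat.split\<close>)
  qed
  have "poly R 1 = 1" using prod unfolding R_def by (simp add: poly_reflected_root_poly)
  then have "coeff R N = 0" by (subst (asm) R) (simp add: poly_monom)
  then have R1: "R = 1" using R by (simp add: one_pCons)
  show "x = 0"
  proof (rule ccontr)
    assume "x \<noteq> 0"
    then have "poly R (1 / x) = 0"
      using x unfolding R_def by (auto simp: poly_reflected_root_poly prod_list_zero_iff)
    then show False using R1 by simp
  qed
qed

section \<open>Triangular matrices and Cayley--Hamilton\<close>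

lemma upper_triangular_mult:
  fixes A B :: "'a::semiring_0 mat"
  assumes A: "A \<in> carrier_mat n n" and B: "B \<in> carrier_mat n n"
    and uA: "upper_triangular A" and uB: "upper_triangular B"
  shows "upper_triangular (A * B)"
    and "i < n \<Longrightarrow> (A * B) $$ (i,i) = A $$ (i,i) * B $$ (i,i)"
proof -
  have zero: "A $$ (i,l) * B $$ (l,j) = 0" if "i < n" "l < n" "l \<noteq> i \<or> l \<noteq> j" "j \<le> i" for i j l
    using that upper_triangularD[OF uA, of l i] upper_triangularD[OF uB, of j l] A B
    by (cases "l < i") auto
  show "upper_triangular (A * B)"
  proof (rule upper_triangularI)
    fix i j assume ji: "j < i" and i: "i < dim_row (A * B)"
    then have "(A * B) $$ (i,j) = (\<Sum>l<n. A $$ (i,l) * B $$ (l,j))"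
      using A B by (intro mult_mat_index_sum[OF A B]) auto
    also have "\<dots> = 0" by (rule sum.neutral) (use ji i A zero in auto)
    finally show "(A * B) $$ (i,j) = 0" .
  qed
  show "(A * B) $$ (i,i) = A $$ (i,i) * B $$ (i,i)" if i: "i < n"
  proof -
    have "(A * B) $$ (i,i) = (\<Sum>l<n. A $$ (i,l) * B $$ (l,i))" by (rule mult_mat_index_sum[OF A B i i])
    also have "\<dots> = (\<Sum>l\<in>{i}. A $$ (i,l) * B $$ (l,i))"
      by (rule sum.mono_neutral_right) (use i zero in auto)
    finally show ?thesis by simp
  qed
qed

lemma upper_triangular_pow:
  fixes B :: "'a::comm_semiring_1 mat"
  assumes B: "B \<in> carrier_mat n n" and uB: "upper_triangular B"
  shows "upper_triangular (B ^\<^sub>m m) \<and> (\<forall>i<n. (B ^\<^sub>m m) $$ (i,i) = B $$ (i,i) ^ m)"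
proof (induction m)
  case 0 then show ?case using B by auto
next
  case (Suc m)
  then show ?case
    using upper_triangular_mult[OF pow_carrier_mat[OF B] B _ uB] by (simp add: mult.commute)
qed

definition shifted_prod :: "'a::comm_ring_1 mat \<Rightarrow> 'a list \<Rightarrow> 'a mat" where
  "shifted_prod A xs = foldr (\<lambda>x M. (A - x \<cdot>\<^sub>m 1\<^sub>m (dim_row A)) * M) xs (1\<^sub>m (dim_row A))"

lemma shifted_prod_simps [simp]:
  "shifted_prod A [] = 1\<^sub>m (dim_row A)"
  "shifted_prod A (x # xs) = (A - x \<cdot>\<^sub>m 1\<^sub>m (dim_row A)) * shifted_prod A xs"
  unfolding shifted_prod_def by simp_all

lemma shifted_prod_Cons_1:
  fixes A :: "'a::comm_ring_1 mat"
  assumes A: "A \<in> carrier_mat n n"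
  shows "shifted_prod A (1 # xs) = (A - 1\<^sub>m n) * shifted_prod A xs"
proof -
  have "1 \<cdot>\<^sub>m 1\<^sub>m n = (1\<^sub>m n :: 'a mat)" by (rule eq_matI) auto
  then show ?thesis using A by simp
qed

lemma shifted_prod_carrier: "A \<in> carrier_mat n n \<Longrightarrow> shifted_prod A xs \<in> carrier_mat n n"
  by (induction xs) auto

lemma shifted_prod_similar:
  fixes A B :: "'a::comm_ring_1 mat"
  assumes A: "A \<in> carrier_mat n n" and sim: "similar_mat_wit A B P Q"
  shows "shifted_prod A xs = P * shifted_prod B xs * Q"
proof -
  have B: "B \<in> carrier_mat n n" and P: "P \<in> carrier_mat n n" and Q: "Q \<in> carrier_mat n n"
    and QP: "Q * P = 1\<^sub>m n" and PQ: "P * Q = 1\<^sub>m n" and AB: "A = P * B * Q"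
    using sim A unfolding similar_mat_wit_def Let_def by auto
  show ?thesis
  proof (induction xs)
    case Nil then show ?case using A B P PQ by simp
  next
    case (Cons x xs)
    define X where "X = B - x \<cdot>\<^sub>m 1\<^sub>m n"
    define M where "M = shifted_prod B xs"
    have X: "X \<in> carrier_mat n n" and M: "M \<in> carrier_mat n n"
      unfolding X_def M_def using B by (auto intro: shifted_prod_carrier)
    have "P * X * Q = P * B * Q - P * (x \<cdot>\<^sub>m 1\<^sub>m n) * Q"
      unfolding X_def using B P Q
      by (simp add: mult_minus_distrib_mat[of _ n n] minus_mult_distrib_mat[of _ n n])
    also have "P * (x \<cdot>\<^sub>m 1\<^sub>m n) * Q = x \<cdot>\<^sub>m 1\<^sub>m n"
      using P Q PQ by (simp add: mult_smult_distrib[of _ n n _ n] mult_smult_assoc_mat[of _ n n _ n])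
    finally have AX: "A - x \<cdot>\<^sub>m 1\<^sub>m n = P * X * Q" using AB by simp
    have "shifted_prod A (x # xs) = (P * X * Q) * (P * M * Q)"
      using A Cons AX unfolding M_def by simp
    also have "\<dots> = P * (X * ((Q * P) * (M * Q)))"
      using P X Q M by (simp add: assoc_mult_mat[of _ n n _ n _ n])
    also have "\<dots> = P * (X * M) * Q"
      using P X Q M QP by (simp add: assoc_mult_mat[of _ n n _ n _ n])
    also have "\<dots> = P * shifted_prod B (x # xs) * Q" using B unfolding X_def M_def by simp
    finally show ?case .
  qed
qed

text \<open>Cayley--Hamilton for a triangular matrix: row \<open>i\<close> of the product of the last
  \<open>n - a\<close> factors vanishes for \<open>i \<ge> a\<close>, by downward induction on \<open>a\<close>.\<close>

lemma shifted_prod_diag_upper_triangular: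
  fixes B :: "'a::comm_ring_1 mat"
  assumes B: "B \<in> carrier_mat n n" and uB: "upper_triangular B"
  shows "shifted_prod B (diag_mat B) = 0\<^sub>m n n"
proof -
  define es where "es = diag_mat B"
  have len: "length es = n" and es: "\<And>i. i < n \<Longrightarrow> es ! i = B $$ (i,i)"
    using B unfolding es_def diag_mat_def by auto
  have "\<forall>i j. a \<le> i \<longrightarrow> i < n \<longrightarrow> j < n \<longrightarrow> shifted_prod B (drop a es) $$ (i,j) = 0"
    if "a \<le> n" for a
    using that
  proof (induction a rule: inc_induct)
    case (step a)
    define X where "X = B - es ! a \<cdot>\<^sub>m 1\<^sub>m n"
    define M where "M = shifted_prod B (drop (Suc a) es)"
    have X: "X \<in> carrier_mat n n" and M: "M \<in> carrier_mat n n"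
      unfolding X_def M_def using B by (auto intro: shifted_prod_carrier)
    have eq: "shifted_prod B (drop a es) = X * M"
      using step len B unfolding X_def M_def by (simp add: Cons_nth_drop_Suc[symmetric])
    show ?case
    proof (intro allI impI)
      fix i j assume ai: "a \<le> i" and i: "i < n" and j: "j < n"
      have "X $$ (i,l) * M $$ (l,j) = 0" if l: "l < n" for l
      proof -
        consider "l < i" | "l = i" "i = a" | "Suc a \<le> l" using ai by linarith
        then show ?thesis
        proof cases
          case 1 then show ?thesis using upper_triangularD[OF uB 1] i l B by (simp add: X_def)
        next
          case 2 then show ?thesis using es i B by (simp add: X_def)
        next
          case 3 then show ?thesis using step.IH l j by (simp add: M_def)
        qed
      qed
      then show "shifted_prod B (drop a es) $$ (i,j) = 0"
        unfolding eq mult_mat_index_sum[OF X M i j] by simp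
    qed
  qed simp
  from this[of 0] show ?thesis
    using shifted_prod_carrier[OF B, of es] unfolding es_def by (intro eq_matI) auto
qed

lemma mtrace_similar_upper_triangular_pow:
  fixes A B :: "'a::comm_ring_1 mat"
  assumes A: "A \<in> carrier_mat n n" and sim: "similar_mat_wit A B P Q" and uB: "upper_triangular B"
  shows "mtrace (A ^\<^sub>m m) = (\<Sum>i<n. B $$ (i,i) ^ m)"
proof -
  have B: "B \<in> carrier_mat n n" and P: "P \<in> carrier_mat n n" and Q: "Q \<in> carrier_mat n n"
    and QP: "Q * P = 1\<^sub>m n"
    using sim A unfolding similar_mat_wit_def Let_def by auto
  have Bm: "B ^\<^sub>m m \<in> carrier_mat n n" using B by simp
  have "mtrace (A ^\<^sub>m m) = mtrace (P * (B ^\<^sub>m m * Q))"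
    using similar_mat_wit_pow_id[OF sim, of m] P Q Bm by simp
  also have "\<dots> = mtrace (B ^\<^sub>m m * Q * P)" by (rule mtrace_mult_comm) (use P Q Bm in auto)
  also have "\<dots> = mtrace (B ^\<^sub>m m)" using P Q Bm QP right_mult_one_mat[OF Bm] by simp
  also have "\<dots> = (\<Sum>i<n. B $$ (i,i) ^ m)"
    unfolding mtrace_def using upper_triangular_pow[OF B uB] B by simp
  finally show ?thesis .
qed

lemma mtrace_pow_eq_power_sum:
  fixes A :: "'a::conjugatable_ordered_field mat"
  assumes A: "A \<in> carrier_mat n n" and cp: "char_poly A = (\<Prod>e\<leftarrow>es. [:- e, 1:])"
  shows "mtrace (A ^\<^sub>m m) = (\<Sum>e\<leftarrow>es. e ^ m)"
proof -
  obtain B P Q where "schur_decomposition A es = (B, P, Q)" by (cases "schur_decomposition A es")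
  from schur_decomposition[OF A cp this]
  have sim: "similar_mat_wit A B P Q" and uB: "upper_triangular B" and es: "diag_mat B = es" by auto
  have B: "B \<in> carrier_mat n n" using sim A unfolding similar_mat_wit_def Let_def by auto
  have "mtrace (A ^\<^sub>m m) = (\<Sum>i<n. B $$ (i,i) ^ m)" by (rule mtrace_similar_upper_triangular_pow[OF A sim uB])
  also have "\<dots> = (\<Sum>e\<leftarrow>es. e ^ m)"
    using B unfolding es[symmetric] diag_mat_def by (simp add: sum_list_sum_nth lessThan_atLeast0)
  finally show ?thesis .
qed

lemma shifted_prod_char_poly:
  fixes A :: "'a::conjugatable_ordered_field mat"
  assumes A: "A \<in> carrier_mat n n" and cp: "char_poly A = (\<Prod>e\<leftarrow>es. [:- e, 1:])"
  shows "shifted_prod A es = 0\<^sub>m n n"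
proof -
  obtain B P Q where "schur_decomposition A es = (B, P, Q)" by (cases "schur_decomposition A es")
  from schur_decomposition[OF A cp this]
  have sim: "similar_mat_wit A B P Q" and uB: "upper_triangular B" and es: "diag_mat B = es" by auto
  have B: "B \<in> carrier_mat n n" and P: "P \<in> carrier_mat n n" and Q: "Q \<in> carrier_mat n n"
    using sim A unfolding similar_mat_wit_def Let_def by auto
  have "shifted_prod A es = P * 0\<^sub>m n n * Q"
    using shifted_prod_similar[OF A sim] shifted_prod_diag_upper_triangular[OF B uB] es by simp
  also have "\<dots> = 0\<^sub>m n n" using P Q by simp
  finally show ?thesis .
qed

lemma proots_prod_list_linear:
  fixes as :: "'a::idom list"
  shows "proots (\<Prod>a\<leftarrow>as. [:- a, 1:]) = mset as"
proof (induction as)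
  case (Cons a as)
  have "(\<Prod>a\<leftarrow>as. [:- a, 1:]) \<noteq> 0" by (auto simp: prod_list_zero_iff)
  then have "proots ([:- a, 1:] * (\<Prod>a\<leftarrow>as. [:- a, 1:])) = proots [:- a, 1:] + mset as"
    unfolding Cons.IH[symmetric] by (intro proots_mult) auto
  moreover have "proots [:- a, 1:] = {#a#}" using proots_linear_factor[of "-a"] by simp
  ultimately show ?case by simp
qed simp

section \<open>Hessenberg matrices with unit row and column sums\<close>

locale unit_sum_hessenberg =
  fixes A :: "'a::idom mat" and n :: nat and \<rho> :: 'a
  assumes carrier: "A \<in> carrier_mat n n" and band: "upper_band A 1"
    and superdiag: "\<And>l. l + 1 < n \<Longrightarrow> A $$ (l, l + 1) = \<rho>" and superdiag_nonzero: "\<rho> \<noteq> 0"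
    and row_sum: "\<And>i. i < n \<Longrightarrow> (\<Sum>j<n. A $$ (i,j)) = 1"
    and col_sum: "\<And>j. j < n \<Longrightarrow> (\<Sum>i<n. A $$ (i,j)) = 1"
begin

lemma eigenvalue_one:
  assumes n: "0 < n"
  shows "eigenvalue A 1"
proof -
  define v :: "'a vec" where "v = vec n (\<lambda>_. 1)"
  have "v $ 0 \<noteq> 0\<^sub>v n $ 0" using n unfolding v_def by simp
  then have "v \<noteq> 0\<^sub>v n" by auto
  moreover have "A *\<^sub>v v = 1 \<cdot>\<^sub>v v"
    using carrier row_sum unfolding v_def by (intro eq_vecI) (auto simp: scalar_prod_def lessThan_atLeast0)
  ultimately show ?thesis
    using carrier unfolding eigenvalue_def eigenvector_def by (intro exI[of _ v]) (auto simp: v_def)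
qed

text \<open>The kernel of \<open>A - 1\<close> consists of constant vectors: row \<open>i\<close> of \<open>A - 1\<close> sums to \<open>0\<close>
  and determines entry \<open>i + 1\<close> from the entries up to \<open>i\<close>, with coefficient \<open>\<rho> \<noteq> 0\<close>.\<close>

lemma const_col_if_mult_eq_0:
  assumes G: "G \<in> carrier_mat n n" and AG: "(A - 1\<^sub>m n) * G = 0\<^sub>m n n" and j: "j < n"
  shows "i < n \<Longrightarrow> G $$ (i,j) = G $$ (0,j)"
proof (induction i rule: less_induct)
  case (less i)
  show ?case
  proof (cases i)
    case (Suc k)
    define y where "y l = G $$ (l,j) - G $$ (0,j)" for l
    have k: "k < n" "k + 1 < n" using less.prems Suc by auto
    have AI: "A - 1\<^sub>m n \<in> carrier_mat n n" using carrier by auto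
    have "(\<Sum>l<n. (A - 1\<^sub>m n) $$ (k,l)) = (\<Sum>l<n. A $$ (k,l) - (if k = l then 1 else 0))"
      using carrier k by (intro sum.cong) auto
    also have "\<dots> = 0" using row_sum[OF k(1)] k by (simp add: sum_subtractf)
    finally have rs: "(\<Sum>l<n. (A - 1\<^sub>m n) $$ (k,l)) = 0" .
    have "(\<Sum>l<n. (A - 1\<^sub>m n) $$ (k,l) * y l)
        = ((A - 1\<^sub>m n) * G) $$ (k,j) - G $$ (0,j) * (\<Sum>l<n. (A - 1\<^sub>m n) $$ (k,l))"
      unfolding y_def mult_mat_index_sum[OF AI G k(1) j]
      by (simp add: algebra_simps sum_subtractf sum_distrib_left)
    also have "\<dots> = 0" using AG k j rs by simp
    finally have "(\<Sum>l<n. (A - 1\<^sub>m n) $$ (k,l) * y l) = 0" .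
    moreover have "(\<Sum>l<n. (A - 1\<^sub>m n) $$ (k,l) * y l) = (\<Sum>l\<in>{i}. (A - 1\<^sub>m n) $$ (k,l) * y l)"
    proof (rule sum.mono_neutral_right)
      show "\<forall>l\<in>{..<n} - {i}. (A - 1\<^sub>m n) $$ (k,l) * y l = 0"
      proof
        fix l assume l: "l \<in> {..<n} - {i}"
        consider "l < i" | "i < l" using l by fastforce
        then show "(A - 1\<^sub>m n) $$ (k,l) * y l = 0"
        proof cases
          case 1 then show ?thesis using less.IH[of l] less.prems by (simp add: y_def)
        next
          case 2 then show ?thesis using upper_bandD[OF band carrier k(1), of l] l k Suc carrier by auto
        qed
      qed
    qed (use less.prems in auto)
    ultimately have "\<rho> * y i = 0" using superdiag[OF k(2)] carrier k Suc by simp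
    then show ?thesis using superdiag_nonzero by (simp add: y_def)
  qed simp
qed

lemma shifted_prod_col_sum:
  "j < n \<Longrightarrow> (\<Sum>i<n. shifted_prod A xs $$ (i,j)) = (\<Prod>x\<leftarrow>xs. 1 - x)"
proof (induction xs arbitrary: j)
  case Nil
  then show ?case using carrier by (simp add: sum.delta)
next
  case (Cons x xs)
  define X where "X = A - x \<cdot>\<^sub>m 1\<^sub>m n"
  define M where "M = shifted_prod A xs"
  have X: "X \<in> carrier_mat n n" and M: "M \<in> carrier_mat n n"
    unfolding X_def M_def using carrier by (auto intro: shifted_prod_carrier)
  have cs: "(\<Sum>i<n. X $$ (i,l)) = 1 - x" if l: "l < n" for l
  proof -
    have "(\<Sum>i<n. X $$ (i,l)) = (\<Sum>i<n. A $$ (i,l) - (if i = l then x else 0))"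
      unfolding X_def using carrier l by (intro sum.cong) auto
    also have "\<dots> = 1 - x" using col_sum[OF l] l by (simp add: sum_subtractf)
    finally show ?thesis .
  qed
  have "(\<Sum>i<n. shifted_prod A (x # xs) $$ (i,j)) = (\<Sum>i<n. \<Sum>l<n. X $$ (i,l) * M $$ (l,j))"
    using carrier Cons.prems unfolding X_def M_def
    by (intro sum.cong) (simp_all add: mult_mat_index_sum[OF X[unfolded X_def] M[unfolded M_def]])
  also have "\<dots> = (\<Sum>l<n. \<Sum>i<n. X $$ (i,l) * M $$ (l,j))" by (rule sum.swap)
  also have "\<dots> = (\<Sum>l<n. (1 - x) * M $$ (l,j))"
  proof (rule sum.cong[OF refl])
    fix l assume l: "l \<in> {..<n}"
    have "(\<Sum>i<n. X $$ (i,l) * M $$ (l,j)) = (\<Sum>i<n. X $$ (i,l)) * M $$ (l,j)"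
      by (rule sum_distrib_right[symmetric])
    also have "\<dots> = (1 - x) * M $$ (l,j)" using cs l by simp
    finally show "(\<Sum>i<n. X $$ (i,l) * M $$ (l,j)) = (1 - x) * M $$ (l,j)" .
  qed
  also have "\<dots> = (1 - x) * (\<Sum>l<n. M $$ (l,j))" by (simp add: sum_distrib_left)
  finally show ?case using Cons unfolding M_def by simp
qed

lemma shifted_prod_upper_band: "upper_band (shifted_prod A xs) (int (length xs))"
proof (induction xs)
  case Nil then show ?case using carrier upper_band_one[of n] by simp
next
  case (Cons x xs)
  have bX: "upper_band (A - x \<cdot>\<^sub>m 1\<^sub>m n) 1" by (rule upper_band_minus_scalar[OF carrier band]) simp
  have "upper_band ((A - x \<cdot>\<^sub>m 1\<^sub>m n) * shifted_prod A xs) (1 + int (length xs))"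
    by (rule upper_band_mult[OF _ shifted_prod_carrier[OF carrier] bX Cons]) (use carrier in auto)
  then show ?case using carrier by (simp add: add.commute)
qed

lemma shifted_prod_superdiag:
  "i + length xs < n \<Longrightarrow> shifted_prod A xs $$ (i, i + length xs) = \<rho> ^ length xs"
proof (induction xs arbitrary: i)
  case Nil then show ?case using carrier by simp
next
  case (Cons x xs)
  define X where "X = A - x \<cdot>\<^sub>m 1\<^sub>m n"
  define M where "M = shifted_prod A xs"
  have X: "X \<in> carrier_mat n n" and M: "M \<in> carrier_mat n n"
    unfolding X_def M_def using carrier by (auto intro: shifted_prod_carrier)
  have bX: "upper_band X 1" unfolding X_def by (rule upper_band_minus_scalar[OF carrier band]) simp
  have "X $$ (i, i + 1) = \<rho>" using superdiag[of i] Cons.prems carrier unfolding X_def by simp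
  moreover have "M $$ (i + 1, i + 1 + length xs) = \<rho> ^ length xs"
    unfolding M_def by (rule Cons.IH) (use Cons.prems in simp)
  moreover have "(X * M) $$ (i, i + 1 + length xs) = X $$ (i, i + 1) * M $$ (i + 1, i + 1 + length xs)"
  proof (rule upper_band_mult_index[OF X M])
    show "upper_band X (int (i + 1) - int i)" using bX by simp
    show "upper_band M (int (i + 1 + length xs) - int (i + 1))"
      using shifted_prod_upper_band[of xs] unfolding M_def by simp
  qed (use Cons.prems in simp_all)
  moreover have "X * M = shifted_prod A (x # xs)" using carrier unfolding X_def M_def by simp
  ultimately show ?case by (simp add: add.commute add.left_commute)
qed

lemma prod_one_minus_if_shifted_prod_eq_0:
  assumes z: "shifted_prod A (1 # xs) = 0\<^sub>m n n" and len: "length xs = n - 1" and n: "0 < n"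
  shows "(\<Prod>x\<leftarrow>xs. 1 - x) = of_nat n * \<rho> ^ (n - 1)"
proof -
  define G where "G = shifted_prod A xs"
  have G: "G \<in> carrier_mat n n" unfolding G_def by (rule shifted_prod_carrier[OF carrier])
  have "(A - 1\<^sub>m n) * G = 0\<^sub>m n n"
    using z unfolding G_def shifted_prod_Cons_1[OF carrier] .
  note const = const_col_if_mult_eq_0[OF G this]
  have "(\<Prod>x\<leftarrow>xs. 1 - x) = (\<Sum>i<n. G $$ (i, n - 1))"
    unfolding G_def by (rule shifted_prod_col_sum[symmetric]) (use n in simp)
  also have "\<dots> = (\<Sum>i<n. G $$ (0, n - 1))"
    by (rule sum.cong[OF refl], rule const) (use n in auto)
  also have "\<dots> = of_nat n * G $$ (0, 0 + length xs)" using len by simp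
  also have "G $$ (0, 0 + length xs) = \<rho> ^ (n - 1)"
    unfolding G_def using shifted_prod_superdiag[of 0 xs] len n by simp
  finally show ?thesis .
qed

end

lemma unit_sum_hessenberg_proots_char_poly:
  fixes A :: "complex mat"
  assumes "unit_sum_hessenberg A n \<rho>" and n: "0 < n" and \<rho>: "of_nat n * \<rho> ^ (n - 1) = 1"
    and tr: "\<And>m. 1 \<le> m \<Longrightarrow> m + 1 < n \<Longrightarrow> mtrace (A ^\<^sub>m m) = 1"
  shows "proots (char_poly A) = add_mset 1 (replicate_mset (n - 1) 0)"
proof -
  interpret unit_sum_hessenberg A n \<rho> by fact
  obtain as where cp: "char_poly A = (\<Prod>a\<leftarrow>as. [:- a, 1:])" and las: "length as = n"
    using char_poly_factorized[OF carrier] by blast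
  have "poly (char_poly A) 1 = 0"
    using eigenvalue_one[OF n] eigenvalue_root_char_poly[OF carrier] by simp
  then have "1 \<in> set as" unfolding cp by (auto simp: poly_prod_list prod_list_zero_iff)
  define xs where "xs = remove1 1 as"
  have mset_as: "mset as = mset (1 # xs)" unfolding xs_def using \<open>1 \<in> set as\<close> by simp
  have len: "length xs = n - 1" using las arg_cong[OF mset_as, of size] by simp
  have "(\<Prod>a\<leftarrow>as. [:- a, 1:]) = prod_mset (mset (map (\<lambda>a. [:- a, 1:]) as))"
    by (rule prod_mset_prod_list[symmetric])
  also have "mset (map (\<lambda>a. [:- a, 1:]) as) = mset (map (\<lambda>a. [:- a, 1:]) (1 # xs))"
    by (simp only: mset_map mset_as)
  finally have cp': "char_poly A = (\<Prod>e\<leftarrow>1 # xs. [:- e, 1:])"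
    unfolding cp prod_mset_prod_list .
  have ps: "(\<Sum>x\<leftarrow>xs. x ^ m) = 0" if "1 \<le> m" "m < length xs" for m
    using tr[of m] mtrace_pow_eq_power_sum[OF carrier cp', of m] that len by simp
  have "(\<Prod>x\<leftarrow>xs. 1 - x) = 1"
    using prod_one_minus_if_shifted_prod_eq_0[OF shifted_prod_char_poly[OF carrier cp'] len n] \<rho> by simp
  then have "x = 0" if "x \<in> set xs" for x using power_sums_eq_0_imp_zero[OF ps _ that] by blast
  then have "xs = replicate (n - 1) 0" using len by (simp add: list_eq_iff_nth_eq)
  then show ?thesis unfolding cp proots_prod_list_linear mset_as by simp
qed

section \<open>The Chet matrices\<close>

lemma chet_cs_length [simp]: "length (chet_cs n k) = k"
  by (induction k) auto

lemma chet_cs_nth: "l < m \<Longrightarrow> chet_cs n m ! l = c_next n (chet_cs n l)"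
proof (induction m)
  case (Suc m) then show ?case by (cases "l = m") (auto simp: nth_append)
qed simp

lemma c_of_chet_cs: "l < k \<Longrightarrow> k \<le> m \<Longrightarrow> c_of (chet_cs n m) l = c_of (chet_cs n k) l"
  unfolding c_of_def by (auto simp: chet_cs_nth)

lemma chet_mat_carrier [simp]: "chet_mat n r c b \<in> carrier_mat n n"
  unfolding chet_mat_def by auto

lemma chet_mat_dim [simp]: "dim_row (chet_mat n r c b) = n" "dim_col (chet_mat n r c b) = n"
  unfolding chet_mat_def by auto

lemma chet_mat_index:
  "i < n \<Longrightarrow> j < n \<Longrightarrow> chet_mat n r c b $$ (i,j) = chet_pattern n r c b (i + 1) (j + 1)"
  unfolding chet_mat_def by auto

lemma chet_mat_upper_band: "upper_band (chet_mat n r c b) 1"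
  unfolding upper_band_def chet_mat_def chet_pattern_def by auto

lemma chet_mat_superdiag: "l + 1 < n \<Longrightarrow> chet_mat n r c b $$ (l, l + 1) = r"
  unfolding chet_mat_def chet_pattern_def by auto

lemma chet_mat_diff_upper_band:
  assumes c: "\<And>d. d < k \<Longrightarrow> c d = c' d" and b: "\<And>d. d < k \<Longrightarrow> b d = b' d"
  shows "upper_band (chet_mat n r c b - chet_mat n r c' b') (- int k)"
  unfolding upper_band_def
proof (intro allI impI)
  fix i j assume "i < dim_row (chet_mat n r c b - chet_mat n r c' b')"
    and "j < dim_col (chet_mat n r c b - chet_mat n r c' b')" and ij: "- int k < int j - int i"
  then have i: "i < n" and j: "j < n" by auto
  have "chet_pattern n r c b (i + 1) (j + 1) = chet_pattern n r c' b' (i + 1) (j + 1)"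
    unfolding chet_pattern_def using c[of "i - j"] b[of i] b[of "n - (j + 1)"] ij i j by auto
  then show "(chet_mat n r c b - chet_mat n r c' b') $$ (i,j) = 0"
    using i j by (simp add: chet_mat_index)
qed

lemma chet_mat_diff_subdiag_sum:
  assumes k: "k + 2 < n" and b: "b k = b' k"
  shows "(\<Sum>j<n-k. (chet_mat n r c b - chet_mat n r c' b') $$ (j + k, j)) = real (n - k - 2) * (c k - c' k)"
proof -
  have "(\<Sum>j<n-k. (chet_mat n r c b - chet_mat n r c' b') $$ (j + k, j))
      = (\<Sum>j<n-k. if 1 \<le> j \<and> j \<le> n - k - 2 then c k - c' k else 0)"
  proof (rule sum.cong[OF refl])
    fix j assume j: "j \<in> {..<n-k}"
    then have "(chet_mat n r c b - chet_mat n r c' b') $$ (j + k, j)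
       = chet_pattern n r c b (j + k + 1) (j + 1) - chet_pattern n r c' b' (j + k + 1) (j + 1)"
      by (auto simp: chet_mat_index)
    also have "\<dots> = (if 1 \<le> j \<and> j \<le> n - k - 2 then c k - c' k else 0)"
      unfolding chet_pattern_def using j k b by auto
    finally show "(chet_mat n r c b - chet_mat n r c' b') $$ (j + k, j)
      = (if 1 \<le> j \<and> j \<le> n - k - 2 then c k - c' k else 0)" .
  qed
  also have "\<dots> = (\<Sum>j\<in>{1..n-k-2}. c k - c' k)"
    by (rule sum.mono_neutral_cong_right) auto
  finally show ?thesis by simp
qed

lemma chet_r_pos: "2 \<le> n \<Longrightarrow> 0 < chet_r n"
  unfolding chet_r_def by auto

lemma chet_r_pow: assumes n: "2 \<le> n" shows "chet_r n ^ (n - 1) = 1 / real n"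
proof -
  have "chet_r n ^ (n - 1) = chet_r n powr real (n - 1)" using chet_r_pos[OF n] by (simp add: powr_realpow)
  also have "\<dots> = (1 / real n) powr (1 / (real n - 1) * real (n - 1))"
    unfolding chet_r_def by (simp add: powr_powr)
  also have "1 / (real n - 1) * real (n - 1) = 1" using n by (simp add: of_nat_diff)
  finally show ?thesis using n by simp
qed

lemma b_formula_cong: "(\<And>j. j < d \<Longrightarrow> c j = c' j) \<Longrightarrow> b_formula r c d = b_formula r c' d"
  unfolding b_formula_def by auto

text \<open>\<open>C\<^sub>n\<close> and its truncation \<open>C\<^sub>n|\<^sub>k\<close> differ only from the \<open>k\<close>-th subdiagonal on, and on that
  subdiagonal by \<open>c\<^sub>k\<close> in \<open>n - k - 2\<close> places; this is what the formula for \<open>c\<^sub>k\<close> compensates.\<close>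

lemma chet_minus_trunc:
  assumes k: "k + 2 < n"
  shows "upper_band (chet n - chet_trunc n (chet_cs n k)) (- int k)"
    and "(\<Sum>j<n-k. (chet n - chet_trunc n (chet_cs n k)) $$ (j + k, j))
      = real (n - k - 2) * c_next n (chet_cs n k)"
proof -
  define r where "r = chet_r n"
  define cl where "cl = chet_cs n k"
  define bT where "bT l = (if l \<le> k then b_formula r (c_of cl) l else 0)" for l
  have T: "chet_trunc n cl = chet_mat n r (c_of cl) bT"
    unfolding chet_trunc_def bT_def cl_def r_def Let_def by simp
  have C: "chet n = chet_mat n r (chet_c n) (chet_b n)" unfolding chet_def r_def ..
  have c: "chet_c n d = c_of cl d" if "d < k" for d
    unfolding chet_c_def cl_def using that k by (intro c_of_chet_cs) auto
  have b: "chet_b n d = bT d" if "d \<le> k" for d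
  proof -
    have "chet_b n d = b_formula r (chet_c n) d" unfolding chet_b_def r_def using that k by auto
    also have "\<dots> = b_formula r (c_of cl) d" by (rule b_formula_cong) (use c that in auto)
    finally show ?thesis unfolding bT_def using that by simp
  qed
  show "upper_band (chet n - chet_trunc n (chet_cs n k)) (- int k)"
    unfolding C T[unfolded cl_def] by (rule chet_mat_diff_upper_band) (use c b in \<open>auto simp: cl_def\<close>)
  have "chet_c n k = c_next n cl"
    unfolding chet_c_def c_of_def cl_def using k by (auto simp: chet_cs_nth)
  moreover have "c_of cl k = 0" unfolding c_of_def cl_def by simp
  ultimately show "(\<Sum>j<n-k. (chet n - chet_trunc n (chet_cs n k)) $$ (j + k, j))
      = real (n - k - 2) * c_next n (chet_cs n k)"
    unfolding C T[unfolded cl_def] using chet_mat_diff_subdiag_sum[OF k, of "chet_b n" bT] b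
    by (simp add: cl_def)
qed

lemma mtrace_chet_pow:
  assumes k: "k + 2 < n"
  shows "mtrace (chet n ^\<^sub>m (k + 1)) = 1"
proof -
  define T where "T = chet_trunc n (chet_cs n k)"
  define r where "r = chet_r n"
  have C: "chet n \<in> carrier_mat n n" "upper_band (chet n) 1" "\<And>l. l + 1 < n \<Longrightarrow> chet n $$ (l, l + 1) = r"
    unfolding chet_def r_def by (simp, rule chet_mat_upper_band, rule chet_mat_superdiag)
  have T': "T \<in> carrier_mat n n" "upper_band T 1" "\<And>l. l + 1 < n \<Longrightarrow> T $$ (l, l + 1) = r"
    unfolding T_def chet_trunc_def Let_def r_def by (simp, rule chet_mat_upper_band, rule chet_mat_superdiag)
  note D = chet_minus_trunc[OF k, folded T_def]
  have nz: "real (n - k - 2) * (real k + 1) * r ^ k \<noteq> 0" using k chet_r_pos[of n] unfolding r_def by auto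
  have cn: "c_next n (chet_cs n k) = (1 - mtrace (T ^\<^sub>m (k + 1))) / (real (n - k - 2) * (real k + 1) * r ^ k)"
    unfolding c_next_def Let_def T_def r_def using k by (simp add: of_nat_diff)
  have "mtrace (chet n ^\<^sub>m (k + 1))
      = mtrace (T ^\<^sub>m (k + 1)) + of_nat (k + 1) * (r ^ k * (real (n - k - 2) * c_next n (chet_cs n k)))"
    using mtrace_pow_perturb[OF C(1) T'(1) C(2) T'(2) D(1)] D(2) C(1)
      mtrace_mult_pow_superdiag[OF T'(1) minus_carrier_mat[OF T'(1)] T'(2) D(1) T'(3)]
    by simp
  also have "\<dots> = mtrace (T ^\<^sub>m (k + 1))
      + (real (n - k - 2) * (real k + 1) * r ^ k) * c_next n (chet_cs n k)"
    by (simp add: algebra_simps)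
  also have "\<dots> = 1" using nz unfolding cn by simp
  finally show ?thesis .
qed

lemma chet_mat_row_sum:
  fixes c b :: "nat \<Rightarrow> real"
  assumes n: "2 \<le> n" and b: "\<And>l. l \<le> n - 2 \<Longrightarrow> b l = 1 - r - (\<Sum>j<l. c j)"
    and b_sum: "(\<Sum>l<n. b l) = 1" and i: "i < n"
  shows "(\<Sum>j<n. chet_mat n r c b $$ (i,j)) = 1"
proof (cases "i = n - 1")
  case True
  have "(\<Sum>j<n. chet_mat n r c b $$ (i,j)) = (\<Sum>j<n. b (n - Suc j))"
    by (rule sum.cong) (use True n in \<open>auto simp: chet_mat_index chet_pattern_def\<close>)
  also have "\<dots> = 1" using b_sum by (simp add: sum.nat_diff_reindex)
  finally show ?thesis .
next
  case False
  then have i': "i \<le> n - 2" using i by auto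
  have "(\<Sum>j<n. chet_mat n r c b $$ (i,j)) = (\<Sum>j<n. (if j = 0 then b i else 0)
      + (if 1 \<le> j \<and> j < i + 1 then c (i - j) else 0) + (if j = i + 1 then r else 0))"
    by (rule sum.cong) (use i' n in \<open>auto simp: chet_mat_index chet_pattern_def\<close>)
  also have "\<dots> = b i + (\<Sum>j\<in>{1..<i+1}. c (i - j)) + r"
  proof -
    have "(\<Sum>j<n. (if 1 \<le> j \<and> j < i + 1 then c (i - j) else 0)) = (\<Sum>j\<in>{1..<i+1}. c (i - j))"
      by (rule sum.mono_neutral_cong_right) (use i' n in auto)
    then show ?thesis using i' n by (simp add: sum.distrib sum.delta)
  qed
  also have "(\<Sum>j\<in>{1..<i+1}. c (i - j)) = (\<Sum>l<i. c l)"
  proof -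
    have "(\<Sum>j\<in>{1..<i+1}. c (i - j)) = (\<Sum>j\<in>{0..<i}. c (i - (j + 1)))"
      using sum.shift_bounds_nat_ivl[of "\<lambda>j. c (i - j)" 0 1 i] by simp
    also have "\<dots> = (\<Sum>j<i. c (i - Suc j))" by (simp add: atLeast0LessThan)
    also have "\<dots> = (\<Sum>l<i. c l)" by (rule sum.nat_diff_reindex)
    finally show ?thesis .
  qed
  finally show ?thesis using b[OF i'] by simp
qed

lemma chet_mat_col_sum:
  fixes c b :: "nat \<Rightarrow> real"
  assumes n: "2 \<le> n" and b: "\<And>l. l \<le> n - 2 \<Longrightarrow> b l = 1 - r - (\<Sum>j<l. c j)"
    and b_sum: "(\<Sum>l<n. b l) = 1" and j: "j < n"
  shows "(\<Sum>i<n. chet_mat n r c b $$ (i,j)) = 1"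
proof (cases "j = 0")
  case True
  have "(\<Sum>i<n. chet_mat n r c b $$ (i,j)) = (\<Sum>i<n. b i)"
    by (rule sum.cong) (use True n in \<open>auto simp: chet_mat_index chet_pattern_def\<close>)
  then show ?thesis using b_sum by simp
next
  case False
  have "(\<Sum>i<n. chet_mat n r c b $$ (i,j)) = (\<Sum>i<n. (if i = j - 1 then r else 0)
      + (if j \<le> i \<and> i < n - 1 then c (i - j) else 0) + (if i = n - 1 then b (n - 1 - j) else 0))"
    by (rule sum.cong) (use False j n in \<open>auto simp: chet_mat_index chet_pattern_def\<close>)
  also have "\<dots> = r + (\<Sum>i\<in>{j..<n-1}. c (i - j)) + b (n - 1 - j)"
  proof -
    have "(\<Sum>i<n. (if j \<le> i \<and> i < n - 1 then c (i - j) else 0)) = (\<Sum>i\<in>{j..<n-1}. c (i - j))"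
      by (rule sum.mono_neutral_cong_right) (use j n in auto)
    then show ?thesis using j n by (simp add: sum.distrib sum.delta)
  qed
  also have "(\<Sum>i\<in>{j..<n-1}. c (i - j)) = (\<Sum>l<n-1-j. c l)"
  proof -
    have "(\<Sum>i\<in>{0+j..<(n-1-j)+j}. c (i - j)) = (\<Sum>i\<in>{0..<n-1-j}. c (i + j - j))"
      by (rule sum.shift_bounds_nat_ivl)
    moreover have "{0+j..<(n-1-j)+j} = {j..<n-1}" using j False by auto
    ultimately show ?thesis by (simp add: atLeast0LessThan)
  qed
  also have "b (n - 1 - j) = 1 - r - (\<Sum>l<n-1-j. c l)" using b[of "n - 1 - j"] False by auto
  finally show ?thesis by simp
qed

lemma chet_b_eq:
  assumes n: "2 \<le> n"
  shows "\<And>l. l \<le> n - 2 \<Longrightarrow> chet_b n l = 1 - chet_r n - (\<Sum>j<l. chet_c n j)"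
    and "(\<Sum>l<n. chet_b n l) = 1"
proof -
  show "\<And>l. l \<le> n - 2 \<Longrightarrow> chet_b n l = 1 - chet_r n - (\<Sum>j<l. chet_c n j)"
    unfolding chet_b_def b_formula_def by auto
  have "{..<n} = insert (n - 1) {..n - 2}" using n by auto
  then have "(\<Sum>l<n. chet_b n l) = chet_b n (n - 1) + (\<Sum>l\<le>n - 2. chet_b n l)" using n by simp
  also have "(\<Sum>l\<le>n - 2. chet_b n l) = (\<Sum>l\<le>n - 2. b_formula (chet_r n) (chet_c n) l)"
    unfolding chet_b_def by auto
  also have "chet_b n (n - 1) = 1 - (\<Sum>l\<le>n - 2. b_formula (chet_r n) (chet_c n) l)"
    unfolding chet_b_def using n by auto
  finally show "(\<Sum>l<n. chet_b n l) = 1" by simp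
qed

lemma chet_row_sum: "2 \<le> n \<Longrightarrow> i < n \<Longrightarrow> (\<Sum>j<n. chet n $$ (i,j)) = 1"
  unfolding chet_def by (rule chet_mat_row_sum) (use chet_b_eq in auto)

lemma chet_col_sum: "2 \<le> n \<Longrightarrow> j < n \<Longrightarrow> (\<Sum>i<n. chet n $$ (i,j)) = 1"
  unfolding chet_def by (rule chet_mat_col_sum) (use chet_b_eq in auto)

lemma unit_sum_hessenberg_chet:
  assumes n: "2 \<le> n"
  shows "unit_sum_hessenberg (map_mat complex_of_real (chet n)) n (complex_of_real (chet_r n))"
proof
  have C: "chet n \<in> carrier_mat n n" unfolding chet_def by simp
  have band: "upper_band (chet n) 1" unfolding chet_def by (rule chet_mat_upper_band)
  show "map_mat complex_of_real (chet n) \<in> carrier_mat n n" using C by simp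
  show "upper_band (map_mat complex_of_real (chet n)) 1"
    using band C unfolding upper_band_def by simp
  show "map_mat complex_of_real (chet n) $$ (l, l + 1) = complex_of_real (chet_r n)" if "l + 1 < n" for l
    using that C chet_mat_superdiag[OF that] unfolding chet_def by simp
  show "complex_of_real (chet_r n) \<noteq> 0" using chet_r_pos[OF n] by simp
  show "(\<Sum>j<n. map_mat complex_of_real (chet n) $$ (i,j)) = 1" if "i < n" for i
    using that C chet_row_sum[OF n that] by (simp flip: of_real_sum)
  show "(\<Sum>i<n. map_mat complex_of_real (chet n) $$ (i,j)) = 1" if "j < n" for j
    using that C chet_col_sum[OF n that] by (simp flip: of_real_sum)
qed

lemma cspec_chet:
  assumes n: "2 \<le> n"
  shows "cspec (chet n) = add_mset 1 (replicate_mset (n - 1) 0)"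
  unfolding cspec_def
proof (rule unit_sum_hessenberg_proots_char_poly[OF unit_sum_hessenberg_chet[OF n]])
  have C: "chet n \<in> carrier_mat n n" unfolding chet_def by simp
  show "of_nat n * complex_of_real (chet_r n) ^ (n - 1) = 1"
    using chet_r_pow[OF n] n by (simp flip: of_real_power)
  fix m assume m: "1 \<le> m" "m + 1 < n"
  have "map_mat complex_of_real (chet n) ^\<^sub>m m = map_mat complex_of_real (chet n ^\<^sub>m m)"
    by (rule of_real_hom.mat_hom_pow[OF C, symmetric])
  moreover have "mtrace (chet n ^\<^sub>m (m - 1 + 1)) = 1" by (rule mtrace_chet_pow) (use m in auto)
  ultimately show "mtrace (map_mat complex_of_real (chet n) ^\<^sub>m m) = 1"
    using C m unfolding mtrace_def by (simp flip: of_real_sum)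
qed (use n in simp)

lemma spectral_gap_chet:
  assumes n: "2 \<le> n"
  shows "spectral_gap (chet n) = 1"
proof -
  have "lambda1 (chet n) = 1" unfolding lambda1_def cspec_chet[OF n] using n by simp
  moreover have "re_lambda2 (chet n) = 0" unfolding re_lambda2_def cspec_chet[OF n] calculation using n by simp
  ultimately show ?thesis unfolding spectral_gap_def by simp
qed

lemma chet_r_le_1: assumes n: "2 \<le> n" shows "chet_r n \<le> 1"
proof -
  have "n - 1 = Suc (n - 2)" using n by simp
  then have "chet_r n ^ Suc (n - 2) = 1 / real n" using chet_r_pow[OF n] by simp
  also have "\<dots> \<le> 1 ^ Suc (n - 2)" using n by simp
  finally show ?thesis by (rule power_le_imp_le_base) simp
qed

lemma one_plus_inverse_pow_le: assumes k: "2 \<le> k" shows "(1 + 1 / real k) ^ k \<le> real k + 1"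
proof -
  have "(1 + 1 / real k) ^ k \<le> exp (1 / real k) ^ k"
    by (rule power_mono) (auto simp: exp_ge_add_one_self add.commute)
  also have "\<dots> = exp 1" using k by (simp flip: exp_of_nat_mult)
  also have "\<dots> \<le> 3" by (rule exp_le)
  finally show ?thesis using k by simp
qed

lemma chet_r_le_odd:
  assumes h: "1 \<le> h" and n: "n = 2 * h + 1"
  shows "chet_r n \<le> 2 * real h / (2 * real h + 1)"
proof -
  define k where "k = 2 * h"
  have k: "2 \<le> k" using h unfolding k_def by simp
  have "2 \<le> n" using h n by simp
  from chet_r_pow[OF this] have "chet_r n ^ k = 1 / (real k + 1)" using n unfolding k_def by (simp add: add.commute)
  also have "\<dots> \<le> 1 / ((real k + 1) / real k) ^ k"
  proof -
    have "1 + 1 / real k = (real k + 1) / real k" using k by (simp add: field_simps)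
    then have "((real k + 1) / real k) ^ k \<le> real k + 1" using one_plus_inverse_pow_le[OF k] by simp
    then show ?thesis using k by (intro divide_left_mono) auto
  qed
  also have "\<dots> = (real k / (real k + 1)) ^ k" by (simp add: power_divide)
  finally have "chet_r n ^ Suc (k - 1) \<le> (real k / (real k + 1)) ^ Suc (k - 1)" using k by simp
  then have "chet_r n \<le> real k / (real k + 1)" by (rule power_le_imp_le_base) simp
  then show ?thesis unfolding k_def by simp
qed

lemma chet_prefix_cut:
  assumes h: "1 \<le> h" "h < n"
  shows "(\<Sum>i\<in>{1..h}. \<Sum>j\<in>{1..n} - {1..h}. chet n $$ (i - 1, j - 1)) = chet_r n"
proof -
  have "(\<Sum>j\<in>{1..n} - {1..h}. chet n $$ (i - 1, j - 1)) = (if i = h then chet_r n else 0)"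
    if i: "i \<in> {1..h}" for i
  proof -
    have "(\<Sum>j\<in>{1..n} - {1..h}. chet n $$ (i - 1, j - 1))
        = (\<Sum>j\<in>{1..n} - {1..h}. if j = i + 1 then chet_r n else 0)"
      using i h unfolding chet_def by (intro sum.cong) (auto simp: chet_mat_index chet_pattern_def)
    also have "\<dots> = (if i = h then chet_r n else 0)" using i h by (auto simp: sum.delta)
    finally show ?thesis .
  qed
  then show ?thesis using h by (simp add: sum.delta)
qed

lemma phi_chet_le:
  assumes n: "2 \<le> n"
  shows "phi (chet n) \<le> 2 / real n"
proof -
  define h where "h = n div 2"
  have h: "1 \<le> h" "h < n" using n unfolding h_def by auto
  define f where "f S = (\<Sum>i\<in>S. \<Sum>j\<in>{1..n} - S. chet n $$ (i - 1, j - 1)) / real (card S)" for S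
  define F where "F = {S. S \<subseteq> {1..n} \<and> S \<noteq> {} \<and> real (card S) \<le> real n / 2}"
  have "phi (chet n) = Min (f ` F)" unfolding phi_def f_def F_def chet_def by simp
  also have "\<dots> \<le> f {1..h}"
  proof (rule Min_le)
    show "finite (f ` F)" unfolding F_def by (auto intro: finite_subset[of _ "Pow {1..n}"])
    have "{1..h} \<in> F" unfolding F_def h_def using n by auto
    then show "f {1..h} \<in> f ` F" by (rule imageI)
  qed
  also have "f {1..h} = chet_r n / real h" unfolding f_def using chet_prefix_cut[OF h] by simp
  also have "\<dots> \<le> 2 / real n"
  proof (cases "even n")
    case True
    then have "real n = 2 * real h" unfolding h_def by auto
    then show ?thesis using chet_r_le_1[OF n] h by (simp add: field_simps)
  next
    case False
    then have nh: "n = 2 * h + 1" unfolding h_def by presburger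
    show ?thesis using chet_r_le_odd[OF h(1) nh] h nh by (simp add: field_simps)
  qed
  finally show ?thesis .
qed

lemma sum_atLeast1_atMost_shift: "(\<Sum>j\<in>{1..n::nat}. g (j - 1)) = (\<Sum>j<n. g j)"
  by (induction n) (auto simp: atLeastAtMostSuc_conv add.commute)

theorem theorem1p3:
  fixes n :: nat
  assumes "n \<ge> 2"
  shows "(\<forall>i\<in>{1..n}. (\<Sum>j\<in>{1..n}. chet n $$ (i-1, j-1)) = 1)
       \<and> (\<forall>j\<in>{1..n}. (\<Sum>i\<in>{1..n}. chet n $$ (i-1, j-1)) = 1)
       \<and> phi (chet n) \<le> 2 * spectral_gap (chet n) / real n"
proof (intro conjI ballI)
  fix i assume "i \<in> {1..n}"
  then show "(\<Sum>j\<in>{1..n}. chet n $$ (i-1, j-1)) = 1"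
    using chet_row_sum[OF assms, of "i - 1"] sum_atLeast1_atMost_shift[of "\<lambda>j. chet n $$ (i - 1, j)"] by auto
next
  fix j assume "j \<in> {1..n}"
  then show "(\<Sum>i\<in>{1..n}. chet n $$ (i-1, j-1)) = 1"
    using chet_col_sum[OF assms, of "j - 1"] sum_atLeast1_atMost_shift[of "\<lambda>i. chet n $$ (i, j - 1)"] by auto
next
  show "phi (chet n) \<le> 2 * spectral_gap (chet n) / real n"
    using phi_chet_le[OF assms] spectral_gap_chet[OF assms] by simp
qed

end
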